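(* Consider a u-MPS with core tensor $\mathcal{A}$ and boundary vectors $\alpha,\omega\in\mathbb{R}^D$ such that $\mathcal{Z}_*:=\sum_{s\in\Sigma^*}(\alpha^T\mathcal{A}(s)\omega)^2$ is finite and positive, and let $P_*(s)=(\alpha^T\mathcal{A}(s)\omega)^2/\mathcal{Z}_*$ be the induced probability distribution on $\Sigma^*$. Let $R$ be an unambiguous regex whose right transfer operator $\mathcal{E}^r_R$ converges, and suppose $P_*(R):=\sum_{s'\in\mathcal{L}(R)}P_*(s')>0$. Then $\mathrm{SAMPLE}(R,\alpha\alpha^T,\omega\omega^T)$ outputs a random string distributed according to the conditional distribution $P_*(s\mid s\in\mathcal{L}(R))$, i.e. with probability $P_*(s)/P_*(R)$ if $s\in\mathcal{L}(R)$ and $0$ otherwise.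
   Context: A u-MPS over a finite alphabet $\Sigma$ of size $d$ consists of a core tensor $\mathcal{A}$ of shape $(D,d,D)$, assigning to each $c\in\Sigma$ a matrix $\mathcal{A}(c)\in\mathbb{R}^{D\times D}$, and boundary vectors $\alpha,\omega\in\mathbb{R}^D$; for $s=s_1\cdots s_n$, $\mathcal{A}(s)=\mathcal{A}(s_1)\cdots\mathcal{A}(s_n)$, $\mathcal{A}(\varepsilon)=I$. Regex are syntax trees built from characters $c\in\Sigma$, concatenations $R_1R_2$, unions $R_1|R_2$, Kleene closures $S^*$; $\mathcal{L}(R)$ is the set of strings matching $R$. Match counts: $|s|_c=1$ if $s=c$, else $0$; $|s|_{R_1R_2}=\sum_{s_1s_2=s}|s_1|_{R_1}|s_2|_{R_2}$; $|s|_{R_1|R_2}=|s|_{R_1}+|s|_{R_2}$; $|s|_{S^*}=\sum_{n\ge0}\sum_{s_1\cdots s_n=s}\prod_i|s_i|_S$ (the $n=0$ term being $1$ iff $s=\varepsilon$). $R$ is unambiguous if $|s|_R\in\{0,1\}$ for all $s$ (so $\mathcal{L}(R)=\{s:|s|_R=1\}$). Generalized transfer operators: $\mathcal{E}^r_c(Q)=\mathcal{A}(c)Q\mathcal{A}(c)^T$, $\mathcal{E}^\ell_c(Q)=\mathcal{A}(c)^TQ\mathcal{A}(c)$; $\mathcal{E}^r_{R_1R_2}=\mathcal{E}^r_{R_1}\circ\mathcal{E}^r_{R_2}$, $\mathcal{E}^\ell_{R_1R_2}=\mathcal{E}^\ell_{R_2}\circ\mathcal{E}^\ell_{R_1}$;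 unions give sums; $\mathcal{E}^r_{S^*}=\sum_{n\ge0}(\mathcal{E}^r_S)^{\circ n}$, $\mathcal{E}^\ell_{S^*}=\sum_{n\ge0}(\mathcal{E}^\ell_S)^{\circ n}$. A literal string $s$ is treated as the concatenation of its characters, so $\mathcal{E}^\ell_s(Q)=\mathcal{A}(s)^TQ\mathcal{A}(s)$. $\mathcal{E}^r_R$ converges if all Kleene-closure series in its recursive definition converge. $\mathcal{Z}_R(Q_\ell,Q_r)=\mathrm{Tr}(Q_\ell\mathcal{E}^r_R(Q_r))$. The randomized procedure $\mathrm{SAMPLE}(R,Q_\ell,Q_r)$ is defined recursively: (i) if $R=c$, return $c$; (ii) if $R=R_1R_2$, let $s_1=\mathrm{SAMPLE}(R_1,Q_\ell,\mathcal{E}^r_{R_2}(Q_r))$, then $s_2=\mathrm{SAMPLE}(R_2,\mathcal{E}^\ell_{s_1}(Q_\ell),Q_r)$, return $s_1s_2$; (iii) if $R=R_1|R_2$, choose $i\in\{1,2\}$ with probability $\mathcal{Z}_{R_i}(Q_\ell,Q_r)/\mathcal{Z}_{R_1|R_2}(Q_\ell,Q_r)$ and return $\mathrm{SAMPLE}(R_i,Q_\ell,Q_r)$; (iv) if $R=S^*$, with probability $\mathrm{Tr}(Q_\ell Q_r)/\mathcal{Z}_{S^*}(Q_\ell,Q_r)$ return $\varepsilon$, otherwise return $\mathrm{SAMPLE}(SS^*,Q_\ell,Q_r)$. All random choices are independent, and normalization constants encountered are assumed positive. *)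

theory Defs
  imports "HOL-Probability.Probability"
begin

type_synonym 'd mat = "real^'d^'d"

datatype 'c regex = Chr 'c | Cat "'c regex" "'c regex" | Alt "'c regex" "'c regex" | Star "'c regex"

definition Aword :: "('c \<Rightarrow> 'd::finite mat) \<Rightarrow> 'c list \<Rightarrow> 'd mat" where
  "Aword A s = foldr (\<lambda>c M. A c ** M) s (mat 1)"

definition outer :: "real^'d \<Rightarrow> real^'d \<Rightarrow> 'd::finite mat" where
  "outer u v = (\<chi> i j. u $ i * v $ j)"

text \<open>Match counts |s|_R (possibly infinite, hence ennreal).\<close>
primrec mcount :: "'c regex \<Rightarrow> 'c list \<Rightarrow> ennreal" where
  "mcount (Chr c) s = (if s = [c] then 1 else 0)"
| "mcount (Cat R1 R2) s = (\<Sum>k\<le>length s. mcount R1 (take k s) * mcount R2 (drop k s))"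
| "mcount (Alt R1 R2) s = mcount R1 s + mcount R2 s"
| "mcount (Star S) s =
     (\<Sum>n. \<Sum>ps\<in>{ps. length ps = n \<and> concat ps = s}. prod_list (map (mcount S) ps))"

definition unambiguous :: "'c regex \<Rightarrow> bool" where
  "unambiguous R \<longleftrightarrow> (\<forall>s. mcount R s \<in> {0, 1})"

definition lang :: "'c regex \<Rightarrow> 'c list set" where
  "lang R = {s. mcount R s \<noteq> 0}"

primrec Er :: "('c \<Rightarrow> 'd::finite mat) \<Rightarrow> 'c regex \<Rightarrow> 'd mat \<Rightarrow> 'd mat" where
  "Er A (Chr c) Q = A c ** Q ** transpose (A c)"
| "Er A (Cat R1 R2) Q = Er A R1 (Er A R2 Q)"
| "Er A (Alt R1 R2) Q = Er A R1 Q + Er A R2 Q"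
| "Er A (Star S) Q = (\<Sum>n. (Er A S ^^ n) Q)"

primrec Er_conv :: "('c \<Rightarrow> 'd::finite mat) \<Rightarrow> 'c regex \<Rightarrow> bool" where
  "Er_conv A (Chr c) = True"
| "Er_conv A (Cat R1 R2) = (Er_conv A R1 \<and> Er_conv A R2)"
| "Er_conv A (Alt R1 R2) = (Er_conv A R1 \<and> Er_conv A R2)"
| "Er_conv A (Star S) = (Er_conv A S \<and> (\<forall>Q. summable (\<lambda>n. (Er A S ^^ n) Q)))"

definition El_word :: "('c \<Rightarrow> 'd::finite mat) \<Rightarrow> 'c list \<Rightarrow> 'd mat \<Rightarrow> 'd mat" where
  "El_word A s Q = transpose (Aword A s) ** Q ** Aword A s"

definition Zr :: "('c \<Rightarrow> 'd::finite mat) \<Rightarrow> 'c regex \<Rightarrow> 'd mat \<Rightarrow> 'd mat \<Rightarrow> real" where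
  "Zr A R Ql Qr = trace (Ql ** Er A R Qr)"

text \<open>The randomized procedure SAMPLE; its output distribution is the least-fixed-point
  (sub-probability) semantics of the recursive procedure.\<close>
partial_function (spmf) sample ::
  "('c \<Rightarrow> 'd::finite mat) \<Rightarrow> 'c regex \<Rightarrow> 'd mat \<Rightarrow> 'd mat \<Rightarrow> 'c list spmf" where
  "sample A R Ql Qr =
    (case R of
       Chr c \<Rightarrow> return_spmf [c]
     | Cat R1 R2 \<Rightarrow>
         bind_spmf (sample A R1 Ql (Er A R2 Qr)) (\<lambda>s1.
         bind_spmf (sample A R2 (El_word A s1 Ql) Qr) (\<lambda>s2.
         return_spmf (s1 @ s2)))
     | Alt R1 R2 \<Rightarrow>
         bind_spmf (spmf_of_pmf (bernoulli_pmf (Zr A R1 Ql Qr / Zr A (Alt R1 R2) Ql Qr))) (\<lambda>b.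
         if b then sample A R1 Ql Qr else sample A R2 Ql Qr)
     | Star S \<Rightarrow>
         bind_spmf (spmf_of_pmf (bernoulli_pmf (trace (Ql ** Qr) / Zr A (Star S) Ql Qr))) (\<lambda>b.
         if b then return_spmf [] else sample A (Cat S (Star S)) Ql Qr))"

definition amp :: "('c \<Rightarrow> 'd::finite mat) \<Rightarrow> real^'d \<Rightarrow> real^'d \<Rightarrow> 'c list \<Rightarrow> real" where
  "amp A \<alpha> \<omega> s = \<alpha> \<bullet> (Aword A s *v \<omega>)"

end

(*
  For a positive semidefinite Q and a vector u, give each string s the weight
  w(s) = (A(s)^T u)^T Q (A(s)^T u). Unfolding the recursive definitions (sums over split
  points for concatenation, over the number of factors for Kleene closure) gives
  sum_s |s|_R w(s) = u^T E^r_R(Q) u.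
  SAMPLE is a least fixed point, so unfolding its recursion only bounds its output
  probabilities from below: by induction on R, and on the string length under a Kleene
  closure (where an epsilon-free body forces progress), w(s) <= P[SAMPLE = s] u^T E^r_R(Q) u
  for every s in L(R). For unambiguous R these lower bounds already have total mass one,
  so they are equalities. With u = alpha and Q = omega omega^T the weight is
  (alpha^T A(s) omega)^2.
*)

theory Submission
  imports Defs
begin

section \<open>Quadratic forms and transfer operators\<close>

definition left_state :: "('c \<Rightarrow> 'd::finite mat) \<Rightarrow> 'c list \<Rightarrow> real^'d \<Rightarrow> real^'d" where
  "left_state A s u = transpose (Aword A s) *v u"

definition quad_form :: "'d::finite mat \<Rightarrow> real^'d \<Rightarrow> real" where
  "quad_form M x = x \<bullet> (M *v x)"

definition psd :: "'d::finite mat \<Rightarrow> bool" where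
  "psd M \<longleftrightarrow> (\<forall>x. 0 \<le> quad_form M x)"

definition weight :: "('c \<Rightarrow> 'd::finite mat) \<Rightarrow> real^'d \<Rightarrow> 'd mat \<Rightarrow> 'c list \<Rightarrow> real" where
  "weight A u Q s = quad_form Q (left_state A s u)"

lemma Aword_Nil [simp]: "Aword A [] = mat 1"
  by (simp add: Aword_def)

lemma Aword_Cons: "Aword A (c # s) = A c ** Aword A s"
  by (simp add: Aword_def)

lemma Aword_append: "Aword A (s1 @ s2) = Aword A s1 ** Aword A s2"
  by (induction s1) (simp_all add: Aword_Cons matrix_mul_assoc)

lemma left_state_append: "left_state A (s1 @ s2) u = left_state A s2 (left_state A s1 u)"
  by (simp add: left_state_def Aword_append matrix_transpose_mul matrix_vector_mul_assoc
      del: transpose_matrix_vector)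

lemma quad_form_sandwich: "quad_form (M ** Q ** transpose M) x = quad_form Q (transpose M *v x)"
proof -
  have "x \<bullet> ((M ** Q ** transpose M) *v x) = x \<bullet> (M *v (Q *v (transpose M *v x)))"
    by (simp add: matrix_vector_mul_assoc matrix_mul_assoc del: transpose_matrix_vector)
  also have "\<dots> = (x v* M) \<bullet> (Q *v (transpose M *v x))"
    by (simp add: dot_lmul_matrix)
  finally show ?thesis by (simp add: quad_form_def)
qed

lemma quad_form_add: "quad_form (M + N) x = quad_form M x + quad_form N x"
  by (simp add: quad_form_def matrix_vector_mult_add_rdistrib inner_add_right)

lemma bounded_linear_quad_form: "bounded_linear (\<lambda>M. quad_form M x)"
proof -
  have "linear (\<lambda>M. quad_form M x)"
    by (rule linearI) (simp add: quad_form_add, simp add: quad_form_def scaleR_matrix_vector_assoc[symmetric])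
  then show ?thesis by (simp add: linear_conv_bounded_linear)
qed

lemma quad_form_outer: "quad_form (outer a a) x = (a \<bullet> x)\<^sup>2"
  by (simp add: quad_form_def outer_def matrix_vector_mult_def inner_vec_def power2_eq_square
      sum_distrib_left sum_distrib_right mult_ac)

lemma psd_outer: "psd (outer a a)"
  by (simp add: psd_def quad_form_outer)

lemma trace_outer_mult: "trace (outer u u ** M) = quad_form M u"
  unfolding trace_def outer_def quad_form_def matrix_matrix_mult_def matrix_vector_mult_def inner_vec_def
  by (simp add: sum_distrib_left mult_ac) (subst sum.swap, simp add: mult_ac)

lemma El_word_outer: "El_word A s (outer u u) = outer (left_state A s u) (left_state A s u)"
  by (simp add: El_word_def left_state_def outer_def vec_eq_iff matrix_matrix_mult_def
      matrix_vector_mult_def transpose_def sum_distrib_left sum_distrib_right mult_ac)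

lemma weight_append: "weight A u Q (s1 @ s2) = weight A (left_state A s1 u) Q s2"
  by (simp add: weight_def left_state_append)

lemma weight_Nil [simp]: "weight A u Q [] = quad_form Q u"
  by (simp add: weight_def left_state_def)

lemma weight_Er_Chr: "weight A u Q [c] = quad_form (Er A (Chr c) Q) u"
  by (simp add: weight_def left_state_def Aword_Cons quad_form_sandwich del: transpose_matrix_vector)

lemma weight_nonneg: "psd Q \<Longrightarrow> 0 \<le> weight A u Q s"
  by (simp add: weight_def psd_def)

lemma weight_outer_eq_amp: "weight A \<alpha> (outer \<omega> \<omega>) s = (amp A \<alpha> \<omega> s)\<^sup>2"
proof -
  have "\<omega> \<bullet> left_state A s \<alpha> = (\<alpha> v* Aword A s) \<bullet> \<omega>"
    by (simp add: left_state_def inner_commute)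
  also have "\<dots> = \<alpha> \<bullet> (Aword A s *v \<omega>)"
    by (rule dot_lmul_matrix)
  finally show ?thesis by (simp add: weight_def quad_form_outer amp_def)
qed

lemma linear_sandwich: "linear (\<lambda>Q::'d::finite mat. M ** Q ** N)"
  by (rule linearI)
    (simp_all add: vec_eq_iff matrix_matrix_mult_def sum.distrib distrib_left distrib_right
      sum_distrib_left mult_ac scaleR_sum_right)

lemma linear_funpow: "linear (f :: 'a::real_vector \<Rightarrow> 'a) \<Longrightarrow> linear (f ^^ n)"
  by (induction n) (simp_all add: linear_compose real_vector.linear_id)

lemma linear_Er: "Er_conv A R \<Longrightarrow> linear (Er A R)"
proof (induction R)
  case (Chr c)
  then show ?case by (simp add: linear_sandwich)
next
  case (Cat R1 R2)
  then show ?case using linear_compose[of "Er A R2" "Er A R1"] by (simp add: o_def)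
next
  case (Alt R1 R2)
  then show ?case by (auto intro!: linearI simp: linear_add linear_scale)
next
  case (Star S)
  have lin: "linear (Er A S ^^ n)" for n
    using Star by (simp add: linear_funpow)
  have sm: "summable (\<lambda>n. (Er A S ^^ n) Q)" for Q
    using Star by simp
  show ?case
    by (rule linearI)
      (simp_all add: suminf_add[OF sm sm, symmetric] suminf_scaleR_right[OF sm, symmetric]
        linear_add[OF lin] linear_scale[OF lin])
qed

lemma Er_Star_unfold:
  assumes "Er_conv A (Star S)"
  shows "Er A (Star S) Q = Q + Er A S (Er A (Star S) Q)"
proof -
  have sm: "summable (\<lambda>n. (Er A S ^^ n) Q)"
    using assms by simp
  have "bounded_linear (Er A S)"
    using assms linear_Er[of A S] by (simp add: linear_conv_bounded_linear)
  then have "Er A S (Er A (Star S) Q) = (\<Sum>n. (Er A S ^^ Suc n) Q)"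
    using bounded_linear.suminf[OF _ sm] by simp
  also have "\<dots> = Er A (Star S) Q - Q"
    using suminf_split_head[OF sm] by simp
  finally show ?thesis by simp
qed

lemma psd_Er: "Er_conv A R \<Longrightarrow> psd Q \<Longrightarrow> psd (Er A R Q)"
proof (induction R arbitrary: Q)
  case (Chr c)
  then show ?case by (simp add: psd_def quad_form_sandwich)
next
  case (Cat R1 R2)
  then show ?case by simp
next
  case (Alt R1 R2)
  then show ?case by (simp add: psd_def quad_form_add)
next
  case (Star S)
  have psd_pow: "psd ((Er A S ^^ n) Q)" for n
    using Star by (induction n) auto
  have sm: "summable (\<lambda>n. (Er A S ^^ n) Q)"
    using Star by simp
  have "quad_form (Er A (Star S) Q) x = (\<Sum>n. quad_form ((Er A S ^^ n) Q) x)" for x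
    using bounded_linear.suminf[OF bounded_linear_quad_form sm] by simp
  moreover have "0 \<le> (\<Sum>n. quad_form ((Er A S ^^ n) Q) x)" for x
    using psd_pow bounded_linear.summable[OF bounded_linear_quad_form sm]
    by (auto intro!: suminf_nonneg simp: psd_def)
  ultimately show ?case by (simp add: psd_def)
qed

lemma psd_funpow_Er: "Er_conv A S \<Longrightarrow> psd Q \<Longrightarrow> psd ((Er A S ^^ n) Q)"
  by (induction n) (simp_all add: psd_Er)

lemma Zr_outer: "Zr A R (outer u u) Q = quad_form (Er A R Q) u"
  by (simp add: Zr_def trace_outer_mult)

section \<open>Match counts\<close>

definition cauchy_prod :: "('a list \<Rightarrow> ennreal) \<Rightarrow> ('a list \<Rightarrow> ennreal) \<Rightarrow> 'a list \<Rightarrow> ennreal" where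
  "cauchy_prod f g s = (\<Sum>k\<le>length s. f (take k s) * g (drop k s))"

primrec cauchy_power :: "('a list \<Rightarrow> ennreal) \<Rightarrow> nat \<Rightarrow> 'a list \<Rightarrow> ennreal" where
  "cauchy_power f 0 s = (if s = [] then 1 else 0)"
| "cauchy_power f (Suc n) s = cauchy_prod f (cauchy_power f n) s"

definition factorizations :: "nat \<Rightarrow> 'a list \<Rightarrow> 'a list list set" where
  "factorizations n s = {ps. length ps = n \<and> concat ps = s}"

lemma inj_on_take: "inj_on (\<lambda>k. take k s) {..length s}"
  by (rule inj_onI) (metis atMost_iff length_take min.absorb2)

lemma factorizations_Suc:
  "factorizations (Suc n) s
     = (\<lambda>(k, ps). take k s # ps) ` (SIGMA k:{..length s}. factorizations n (drop k s))"
proof (intro set_eqI iffI)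
  fix ps
  assume "ps \<in> factorizations (Suc n) s"
  then obtain p ps' where ps: "ps = p # ps'" "length ps' = n" "p @ concat ps' = s"
    by (auto simp: factorizations_def length_Suc_conv)
  then have "(length p, ps') \<in> (SIGMA k:{..length s}. factorizations n (drop k s))"
    by (auto simp: factorizations_def)
  moreover have "ps = take (length p) s # ps'"
    using ps by auto
  ultimately show "ps \<in> (\<lambda>(k, ps). take k s # ps) ` (SIGMA k:{..length s}. factorizations n (drop k s))"
    by force
qed (auto simp: factorizations_def)

lemma inj_on_factorizations_Suc:
  "inj_on (\<lambda>(k, ps). take k s # ps) (SIGMA k:{..length s}. factorizations n (drop k s))"
  using inj_onD[OF inj_on_take] by (auto intro!: inj_onI)

lemma finite_factorizations: "finite (factorizations n s)"
proof (induction n arbitrary: s)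
  case 0
  have "factorizations 0 s \<subseteq> {[]}"
    by (auto simp: factorizations_def)
  then show ?case by (rule finite_subset) simp
next
  case (Suc n)
  then show ?case by (simp add: factorizations_Suc)
qed

lemma sum_factorizations_eq_cauchy_power:
  "(\<Sum>ps\<in>factorizations n s. prod_list (map f ps)) = cauchy_power f n s"
proof (induction n arbitrary: s)
  case 0
  have "factorizations 0 s = (if s = [] then {[]} else {})"
    by (auto simp: factorizations_def)
  then show ?case by simp
next
  case (Suc n)
  have "(\<Sum>ps\<in>factorizations (Suc n) s. prod_list (map f ps))
      = (\<Sum>(k, ps)\<in>(SIGMA k:{..length s}. factorizations n (drop k s)). f (take k s) * prod_list (map f ps))"
    unfolding factorizations_Suc
    by (subst sum.reindex[OF inj_on_factorizations_Suc]) (simp add: case_prod_beta')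
  also have "\<dots> = (\<Sum>k\<le>length s. f (take k s) * (\<Sum>ps\<in>factorizations n (drop k s). prod_list (map f ps)))"
    by (simp add: sum.Sigma[symmetric] finite_factorizations sum_distrib_left)
  finally show ?case by (simp add: Suc cauchy_prod_def)
qed

lemma mcount_Cat: "mcount (Cat R1 R2) s = cauchy_prod (mcount R1) (mcount R2) s"
  by (simp add: cauchy_prod_def)

lemma mcount_Star: "mcount (Star S) s = (\<Sum>n. cauchy_power (mcount S) n s)"
  by (simp add: sum_factorizations_eq_cauchy_power[symmetric] factorizations_def)

declare mcount.simps(2,4) [simp del]

lemma mcount_Star_unfold:
  "mcount (Star S) s = (if s = [] then 1 else 0) + mcount (Cat S (Star S)) s"
proof -
  let ?p = "cauchy_power (mcount S)"
  have "(\<lambda>n. ?p n s) sums ((\<Sum>n. ?p (Suc n) s) + ?p 0 s)"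
    by (rule sums_Suc) (rule summable_sums, simp)
  then have "mcount (Star S) s = ?p 0 s + (\<Sum>n. ?p (Suc n) s)"
    unfolding mcount_Star by (simp add: sums_iff add.commute)
  also have "(\<Sum>n. ?p (Suc n) s) = (\<Sum>k\<le>length s. \<Sum>n. mcount S (take k s) * ?p n (drop k s))"
    by (simp add: cauchy_prod_def suminf_sum)
  also have "\<dots> = mcount (Cat S (Star S)) s"
    by (simp add: mcount_Cat cauchy_prod_def mcount_Star ennreal_suminf_cmult)
  finally show ?thesis by simp
qed

lemma cauchy_prod_zero_or_ge_one:
  assumes "\<And>s. f s = 0 \<or> 1 \<le> f s" and "\<And>s. g s = 0 \<or> 1 \<le> g s"
  shows "cauchy_prod f g s = 0 \<or> 1 \<le> cauchy_prod f g s"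
proof (cases "cauchy_prod f g s = 0")
  case False
  then obtain k where k: "k \<le> length s" "f (take k s) \<noteq> 0" "g (drop k s) \<noteq> 0"
    by (auto simp: cauchy_prod_def sum_eq_0_iff)
  then have "1 \<le> f (take k s)" "1 \<le> g (drop k s)"
    using assms(1)[of "take k s"] assms(2)[of "drop k s"] by auto
  then have "1 * 1 \<le> f (take k s) * g (drop k s)"
    by (rule mult_mono) simp_all
  also have "\<dots> \<le> cauchy_prod f g s"
    unfolding cauchy_prod_def by (rule member_le_sum) (use k in simp_all)
  finally show ?thesis by simp
qed simp

lemma mcount_zero_or_ge_one: "mcount R s = 0 \<or> 1 \<le> mcount R s"
proof (induction R arbitrary: s)
  case (Cat R1 R2)
  then show ?case by (simp add: mcount_Cat cauchy_prod_zero_or_ge_one)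
next
  case (Alt R1 R2)
  show ?case
  proof (cases "mcount R1 s = 0")
    case False
    then have "1 \<le> mcount R1 s"
      using Alt.IH(1) by blast
    then show ?thesis by (simp add: add_increasing2)
  qed (simp add: Alt.IH(2))
next
  case (Star S)
  have power: "cauchy_power (mcount S) n s = 0 \<or> 1 \<le> cauchy_power (mcount S) n s" for n s
    by (induction n arbitrary: s) (simp_all add: Star cauchy_prod_zero_or_ge_one)
  show ?case
  proof (cases "mcount (Star S) s = 0")
    case False
    then obtain n where "cauchy_power (mcount S) n s \<noteq> 0"
      by (force simp: mcount_Star)
    then have "1 \<le> cauchy_power (mcount S) n s"
      using power by blast
    also have "\<dots> \<le> mcount (Star S) s"
      unfolding mcount_Star using sum_le_suminf[of "\<lambda>n. cauchy_power (mcount S) n s" "{n}"] by simp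
    finally show ?thesis ..
  qed simp
qed simp

lemma unambiguous_iff_le_one: "unambiguous R \<longleftrightarrow> (\<forall>s. mcount R s \<le> 1)"
proof
  assume "\<forall>s. mcount R s \<le> 1"
  then have "mcount R s \<in> {0, 1}" for s
    using mcount_zero_or_ge_one[of R s] by (metis antisym insertCI)
  then show "unambiguous R"
    by (simp add: unambiguous_def)
next
  assume "unambiguous R"
  then have "mcount R s \<in> {0, 1}" for s
    by (simp add: unambiguous_def)
  then show "\<forall>s. mcount R s \<le> 1"
    by (metis empty_iff insert_iff order_refl zero_le)
qed

lemma mcount_Cat_append_ge: "mcount R1 s1 * mcount R2 s2 \<le> mcount (Cat R1 R2) (s1 @ s2)"
  unfolding mcount_Cat cauchy_prod_def
  using member_le_sum[of "length s1" "{..length (s1 @ s2)}"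
      "\<lambda>k. mcount R1 (take k (s1 @ s2)) * mcount R2 (drop k (s1 @ s2))"]
  by simp

lemma mcount_Star_Nil_ge_one: "1 \<le> mcount (Star S) []"
  by (simp add: mcount_Star_unfold[of S "[]"] add_increasing2)

lemma in_lang_Chr: "s \<in> lang (Chr c) \<longleftrightarrow> s = [c]"
  by (simp add: lang_def)

lemma in_lang_Alt: "s \<in> lang (Alt R1 R2) \<longleftrightarrow> s \<in> lang R1 \<or> s \<in> lang R2"
  by (simp add: lang_def)

lemma in_lang_Cat:
  "s \<in> lang (Cat R1 R2) \<longleftrightarrow> (\<exists>s1 s2. s = s1 @ s2 \<and> s1 \<in> lang R1 \<and> s2 \<in> lang R2)"
proof
  assume "s \<in> lang (Cat R1 R2)"
  then have "cauchy_prod (mcount R1) (mcount R2) s \<noteq> 0"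
    by (simp add: lang_def mcount_Cat)
  then obtain k where "mcount R1 (take k s) \<noteq> 0" "mcount R2 (drop k s) \<noteq> 0"
    by (auto simp: cauchy_prod_def sum_eq_0_iff)
  then show "\<exists>s1 s2. s = s1 @ s2 \<and> s1 \<in> lang R1 \<and> s2 \<in> lang R2"
    by (intro exI[of _ "take k s"] exI[of _ "drop k s"]) (simp add: lang_def)
next
  assume "\<exists>s1 s2. s = s1 @ s2 \<and> s1 \<in> lang R1 \<and> s2 \<in> lang R2"
  then obtain s1 s2 where s: "s = s1 @ s2" and "mcount R1 s1 * mcount R2 s2 \<noteq> 0"
    by (auto simp: lang_def)
  then have "mcount (Cat R1 R2) (s1 @ s2) \<noteq> 0"
    using mcount_Cat_append_ge[of R1 s1 R2 s2] by (metis le_zero_eq)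
  then show "s \<in> lang (Cat R1 R2)"
    by (simp add: lang_def s)
qed

lemma in_lang_Star: "s \<in> lang (Star S) \<longleftrightarrow> s = [] \<or> s \<in> lang (Cat S (Star S))"
  by (simp add: lang_def mcount_Star_unfold[of S s])

lemma lang_nonempty: "\<exists>s. s \<in> lang R"
proof (induction R)
  case (Cat R1 R2)
  then obtain s1 s2 where "s1 \<in> lang R1" "s2 \<in> lang R2"
    by blast
  then show ?case
    using in_lang_Cat by blast
qed (auto simp: in_lang_Chr in_lang_Alt in_lang_Star)

lemma unambiguous_Alt:
  assumes "unambiguous (Alt R1 R2)"
  shows "unambiguous R1 \<and> unambiguous R2"
proof -
  have "mcount R1 s \<le> mcount (Alt R1 R2) s" "mcount R2 s \<le> mcount (Alt R1 R2) s" for s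
    by simp_all
  then show ?thesis
    using assms unfolding unambiguous_iff_le_one by (meson order_trans)
qed

lemma unambiguous_Cat:
  assumes "unambiguous (Cat R1 R2)"
  shows "unambiguous R1 \<and> unambiguous R2"
proof -
  obtain s1 s2 where "s1 \<in> lang R1" "s2 \<in> lang R2"
    using lang_nonempty by blast
  then have one: "1 \<le> mcount R1 s1" "1 \<le> mcount R2 s2"
    using mcount_zero_or_ge_one by (auto simp: lang_def)
  have le: "mcount R1 s * mcount R2 s' \<le> 1" for s s'
    using assms mcount_Cat_append_ge[of R1 s R2 s'] by (auto simp: unambiguous_iff_le_one intro: order_trans)
  have "mcount R1 s \<le> 1" for s
    using mult_left_mono[OF one(2), of "mcount R1 s"] le[of s s2] by simp
  moreover have "mcount R2 s \<le> 1" for s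
    using mult_right_mono[OF one(1), of "mcount R2 s"] le[of s1 s] by simp
  ultimately show ?thesis by (simp add: unambiguous_iff_le_one)
qed

lemma unambiguous_Star:
  assumes "unambiguous (Star S)"
  shows "unambiguous S \<and> mcount S [] = 0"
proof -
  have le: "mcount (Star S) s \<le> 1" for s
    using assms by (simp add: unambiguous_iff_le_one)
  have "mcount S s \<le> 1" for s
  proof -
    have "mcount S s * 1 \<le> mcount S s * mcount (Star S) []"
      by (rule mult_left_mono[OF mcount_Star_Nil_ge_one]) simp
    also have "\<dots> \<le> mcount (Cat S (Star S)) s"
      using mcount_Cat_append_ge[of S s "Star S" "[]"] by simp
    also have "\<dots> \<le> mcount (Star S) s"
      by (simp add: mcount_Star_unfold[of S s])
    finally show ?thesis using le[of s] by simp
  qed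
  moreover have "mcount S [] = 0"
  proof -
    have Nil: "mcount (Star S) [] = 1"
      using le mcount_Star_Nil_ge_one by (rule antisym)
    have "mcount (Cat S (Star S)) [] = mcount S []"
      by (simp add: mcount_Cat cauchy_prod_def Nil)
    then have "1 + mcount S [] = 1 + 0"
      using mcount_Star_unfold[of S "[]"] Nil by simp
    then show ?thesis by (simp only: ennreal_add_left_cancel) simp
  qed
  ultimately show ?thesis by (simp add: unambiguous_iff_le_one)
qed

text \<open>The only consequence of unambiguity that SAMPLE needs: no Kleene-closure body
  matches the empty string, so every unfolding of a star consumes input.\<close>
primrec eps_free_stars :: "'c regex \<Rightarrow> bool" where
  "eps_free_stars (Chr c) = True"
| "eps_free_stars (Cat R1 R2) = (eps_free_stars R1 \<and> eps_free_stars R2)"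
| "eps_free_stars (Alt R1 R2) = (eps_free_stars R1 \<and> eps_free_stars R2)"
| "eps_free_stars (Star S) = ([] \<notin> lang S \<and> eps_free_stars S)"

lemma unambiguous_imp_eps_free_stars: "unambiguous R \<Longrightarrow> eps_free_stars R"
  by (induction R)
    (auto dest: unambiguous_Alt unambiguous_Cat unambiguous_Star simp: lang_def)

lemma mcount_unambiguous:
  assumes "unambiguous R"
  shows "mcount R s = indicator (lang R) s"
proof -
  have "mcount R s \<in> {0, 1}"
    using assms by (simp add: unambiguous_def)
  then show ?thesis
    by (auto simp: lang_def)
qed

section \<open>Total weight of a language\<close>

lemma nn_integral_prefixes:
  assumes "\<And>y. (\<And>k. y \<noteq> take k s) \<Longrightarrow> f y = 0"
  shows "(\<integral>\<^sup>+y. f y \<partial>count_space UNIV) = (\<Sum>k\<le>length s. f (take k s))"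
proof -
  have "(\<integral>\<^sup>+y. f y \<partial>count_space UNIV) = (\<Sum>y\<in>(\<lambda>k. take k s) ` {..length s}. f y)"
  proof (rule nn_integral_count_space')
    fix y
    assume "y \<notin> (\<lambda>k. take k s) ` {..length s}"
    moreover have "take k s \<in> (\<lambda>k. take k s) ` {..length s}" for k
      by (rule image_eqI[of _ _ "min k (length s)"]) (simp_all add: min_def)
    ultimately show "f y = 0"
      using assms by metis
  qed simp_all
  also have "\<dots> = (\<Sum>k\<le>length s. f (take k s))"
    by (simp add: sum.reindex[OF inj_on_take])
  finally show ?thesis .
qed

lemma nn_integral_splits:
  fixes g :: "'a::countable list \<Rightarrow> 'a list \<Rightarrow> ennreal"
  shows "(\<integral>\<^sup>+s. (\<Sum>k\<le>length s. g (take k s) (drop k s)) \<partial>count_space UNIV)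
       = (\<integral>\<^sup>+s1. (\<integral>\<^sup>+s2. g s1 s2 \<partial>count_space UNIV) \<partial>count_space UNIV)"
proof -
  define H where "H s1 s = g s1 (drop (length s1) s) * indicator (range (append s1)) s" for s1 s
  have split: "(\<Sum>k\<le>length s. g (take k s) (drop k s)) = (\<integral>\<^sup>+s1. H s1 s \<partial>count_space UNIV)" for s
  proof -
    have "H s1 s = 0" if "\<And>k. s1 \<noteq> take k s" for s1
    proof -
      have "s \<notin> range (append s1)"
        using that[of "length s1"] by auto
      then show ?thesis by (simp add: H_def)
    qed
    then have "(\<integral>\<^sup>+s1. H s1 s \<partial>count_space UNIV) = (\<Sum>k\<le>length s. H (take k s) s)"
      by (rule nn_integral_prefixes)
    moreover have "s \<in> range (append (take k s))" for k
      by (rule range_eqI[of _ _ "drop k s"]) simp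
    ultimately show ?thesis by (simp add: H_def)
  qed
  have shift: "(\<integral>\<^sup>+s. H s1 s \<partial>count_space UNIV) = (\<integral>\<^sup>+s2. g s1 s2 \<partial>count_space UNIV)" for s1
  proof -
    have "bij_betw (append s1) UNIV (range (append s1))"
      by (simp add: bij_betw_def inj_on_def)
    then have "(\<integral>\<^sup>+s2. g s1 (drop (length s1) (s1 @ s2)) \<partial>count_space UNIV)
        = (\<integral>\<^sup>+s. g s1 (drop (length s1) s) \<partial>count_space (range (append s1)))"
      by (rule nn_integral_bij_count_space)
    then show ?thesis
      by (simp add: H_def nn_integral_count_space_indicator)
  qed
  have "(\<integral>\<^sup>+s. (\<integral>\<^sup>+s1. H s1 s \<partial>count_space UNIV) \<partial>count_space UNIV)
      = (\<integral>\<^sup>+s1. (\<integral>\<^sup>+s. H s1 s \<partial>count_space UNIV) \<partial>count_space UNIV)"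
    by (rule nn_integral_count_space_nn_integral) simp_all
  then show ?thesis
    by (simp add: split shift)
qed

lemma nn_integral_cauchy_prod_weight:
  fixes A :: "'c::countable \<Rightarrow> 'd::finite mat"
  shows "(\<integral>\<^sup>+s. cauchy_prod f g s * weight A u Q s \<partial>count_space UNIV)
       = (\<integral>\<^sup>+s1. f s1 * (\<integral>\<^sup>+s2. g s2 * weight A (left_state A s1 u) Q s2 \<partial>count_space UNIV)
            \<partial>count_space UNIV)"
proof -
  have "cauchy_prod f g s * weight A u Q s
      = (\<Sum>k\<le>length s. f (take k s) * (g (drop k s) * weight A (left_state A (take k s) u) Q (drop k s)))"
    for s
    unfolding cauchy_prod_def sum_distrib_right
    by (rule sum.cong) (simp_all add: mult.assoc weight_append[symmetric])
  then show ?thesis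
    using nn_integral_splits[of "\<lambda>s1 s2. f s1 * (g s2 * weight A (left_state A s1 u) Q s2)"]
    by (simp add: nn_integral_cmult)
qed

lemma nn_integral_cauchy_power_weight:
  fixes A :: "'c::countable \<Rightarrow> 'd::finite mat"
  assumes conv: "Er_conv A S" and "psd Q"
    and weight_S: "\<And>u Q. psd Q \<Longrightarrow>
      (\<integral>\<^sup>+s. mcount S s * weight A u Q s \<partial>count_space UNIV) = quad_form (Er A S Q) u"
  shows "(\<integral>\<^sup>+s. cauchy_power (mcount S) n s * weight A u Q s \<partial>count_space UNIV)
       = quad_form ((Er A S ^^ n) Q) u"
proof (induction n arbitrary: u)
  case 0
  show ?case
    by (subst nn_integral_count_space'[of "{[]}"]) simp_all
next
  case (Suc n)
  have inner: "(\<integral>\<^sup>+s2. cauchy_power (mcount S) n s2 * weight A (left_state A s1 u) Q s2 \<partial>count_space UNIV)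
      = weight A u ((Er A S ^^ n) Q) s1" for s1
    using Suc by (simp add: weight_def)
  show ?case
    using weight_S[of "(Er A S ^^ n) Q"] psd_funpow_Er[OF conv \<open>psd Q\<close>]
    by (simp add: nn_integral_cauchy_prod_weight inner)
qed

lemma nn_integral_mcount_weight:
  fixes A :: "'c::countable \<Rightarrow> 'd::finite mat"
  assumes "Er_conv A R" and "psd Q"
  shows "(\<integral>\<^sup>+s. mcount R s * weight A u Q s \<partial>count_space UNIV) = quad_form (Er A R Q) u"
  using assms
proof (induction R arbitrary: u Q)
  case (Chr c)
  have "(\<integral>\<^sup>+s. mcount (Chr c) s * weight A u Q s \<partial>count_space UNIV) = ennreal (weight A u Q [c])"
    by (subst nn_integral_count_space'[of "{[c]}"]) simp_all
  then show ?case
    by (simp add: weight_Er_Chr)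
next
  case (Alt R1 R2)
  have "0 \<le> quad_form (Er A R1 Q) u" "0 \<le> quad_form (Er A R2 Q) u"
    using Alt.prems psd_Er[of A R1 Q] psd_Er[of A R2 Q] by (simp_all add: psd_def)
  then show ?case
    using Alt by (simp add: distrib_right nn_integral_add quad_form_add ennreal_plus)
next
  case (Cat R1 R2)
  have inner: "(\<integral>\<^sup>+s2. mcount R2 s2 * weight A (left_state A s1 u) Q s2 \<partial>count_space UNIV)
      = weight A u (Er A R2 Q) s1" for s1
    using Cat.IH(2) Cat.prems by (simp add: weight_def)
  have "psd (Er A R2 Q)"
    using Cat.prems by (simp add: psd_Er)
  then show ?case
    using Cat.IH(1) Cat.prems by (simp add: mcount_Cat nn_integral_cauchy_prod_weight inner)
next
  case (Star S)
  let ?E = "Er A S"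
  have psd_pow: "psd ((?E ^^ n) Q)" for n
    using Star.prems by (simp add: psd_funpow_Er)
  have power: "(\<integral>\<^sup>+s. cauchy_power (mcount S) n s * weight A u Q s \<partial>count_space UNIV)
      = quad_form ((?E ^^ n) Q) u" for n
    using Star by (simp add: nn_integral_cauchy_power_weight)
  have sm: "summable (\<lambda>n. (?E ^^ n) Q)"
    using Star.prems by simp
  have "(\<integral>\<^sup>+s. mcount (Star S) s * weight A u Q s \<partial>count_space UNIV)
      = (\<integral>\<^sup>+s. (\<Sum>n. cauchy_power (mcount S) n s * weight A u Q s) \<partial>count_space UNIV)"
    by (simp only: mcount_Star ennreal_suminf_multc)
  also have "\<dots> = (\<Sum>n. \<integral>\<^sup>+s. cauchy_power (mcount S) n s * weight A u Q s \<partial>count_space UNIV)"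
    by (rule nn_integral_suminf) simp
  also have "\<dots> = (\<Sum>n. ennreal (quad_form ((?E ^^ n) Q) u))"
    by (simp only: power)
  also have "\<dots> = ennreal (\<Sum>n. quad_form ((?E ^^ n) Q) u)"
    using psd_pow bounded_linear.summable[OF bounded_linear_quad_form sm]
    by (intro suminf_ennreal2) (simp_all add: psd_def)
  also have "(\<Sum>n. quad_form ((?E ^^ n) Q) u) = quad_form (Er A (Star S) Q) u"
    using bounded_linear.suminf[OF bounded_linear_quad_form sm] by simp
  finally show ?case .
qed

lemma nn_integral_indicator_eq_infsum:
  fixes f :: "'a \<Rightarrow> real"
  assumes "f summable_on B" and "\<And>x. 0 \<le> f x"
  shows "(\<integral>\<^sup>+x. ennreal (f x) * indicator B x \<partial>count_space UNIV) = ennreal (infsum f B)"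
proof -
  have "Infinite_Set_Sum.abs_summable_on f B"
    using assms abs_summable_equivalent[of f B] by simp
  then have "(\<integral>\<^sup>+x. ennreal (f x) \<partial>count_space B) = ennreal (infsum f B)"
    using assms(2) by (simp add: nn_integral_conv_infsetsum infsetsum_infsum)
  then show ?thesis
    by (simp add: nn_integral_count_space_indicator)
qed

lemma quad_form_Er_eq_infsum:
  fixes A :: "'c::countable \<Rightarrow> 'd::finite mat"
  assumes "unambiguous R" and "Er_conv A R" and "psd Q" and "weight A u Q summable_on lang R"
  shows "quad_form (Er A R Q) u = infsum (weight A u Q) (lang R)"
proof -
  have "ennreal (quad_form (Er A R Q) u)
      = (\<integral>\<^sup>+s. ennreal (weight A u Q s) * indicator (lang R) s \<partial>count_space UNIV)"
    using assms by (simp add: nn_integral_mcount_weight[symmetric] mcount_unambiguous mult.commute)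
  also have "\<dots> = ennreal (infsum (weight A u Q) (lang R))"
    using assms by (simp add: nn_integral_indicator_eq_infsum weight_nonneg)
  finally show ?thesis
    using assms psd_Er[of A R Q] by (simp add: psd_def infsum_nonneg weight_nonneg)
qed

section \<open>Output distribution of SAMPLE\<close>

lemma spmf_eq_if_lower_bound:
  assumes nonneg: "\<And>x. 0 \<le> t x" and le: "\<And>x. t x \<le> spmf p x"
    and total: "(\<integral>\<^sup>+x. ennreal (t x) \<partial>count_space UNIV) = 1"
  shows "spmf p x = t x"
proof -
  have "ennreal (spmf p y) = ennreal (t y) + ennreal (spmf p y - t y)" for y
    using nonneg[of y] le[of y] by (simp add: ennreal_plus[symmetric])
  then have "ennreal (weight_spmf p)
      = (\<integral>\<^sup>+y. ennreal (t y) \<partial>count_space UNIV) + (\<integral>\<^sup>+y. ennreal (spmf p y - t y) \<partial>count_space UNIV)"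
    by (simp add: weight_spmf_eq_nn_integral_spmf nn_integral_add)
  also have "\<dots> \<ge> 1 + ennreal (spmf p x - t x)"
    unfolding total by (intro add_left_mono nn_integral_ge_point) simp
  finally have "1 + ennreal (spmf p x - t x) \<le> 1 + 0"
    using weight_spmf_le_1[of p] by (simp add: order_trans)
  then have "spmf p x - t x \<le> 0"
    by (simp add: ennreal_add_left_cancel_le ennreal_eq_0_iff)
  then show ?thesis
    using le[of x] by simp
qed

lemma spmf_bernoulli_mix:
  assumes "0 \<le> a" and "0 \<le> b"
  shows "spmf (spmf_of_pmf (bernoulli_pmf (a / (a + b))) \<bind> (\<lambda>c. if c then p else q)) x * (a + b)
       = a * spmf p x + b * spmf q x"
proof (cases "a + b = 0")
  case False
  then have "a / (a + b) \<le> 1" "0 \<le> a / (a + b)"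
    using assms by simp_all
  then have mix: "spmf (spmf_of_pmf (bernoulli_pmf (a / (a + b))) \<bind> (\<lambda>c. if c then p else q)) x
      = a / (a + b) * spmf p x + (1 - a / (a + b)) * spmf q x"
    by (simp add: pmf_bind)
  have "a / (a + b) * (a + b) = a" "(1 - a / (a + b)) * (a + b) = b"
    using False by (simp_all add: field_simps)
  moreover have "(a / (a + b) * spmf p x + (1 - a / (a + b)) * spmf q x) * (a + b)
      = (a / (a + b) * (a + b)) * spmf p x + ((1 - a / (a + b)) * (a + b)) * spmf q x"
    by (simp only: algebra_simps)
  ultimately show ?thesis
    by (simp only: mix)
next
  case True
  then have "a = 0" "b = 0"
    using assms by simp_all
  then show ?thesis by simp
qed

lemma Zr_Alt: "Zr A (Alt R1 R2) Ql Qr = Zr A R1 Ql Qr + Zr A R2 Ql Qr"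
  by (simp add: Zr_def matrix_add_ldistrib trace_add)

lemma Zr_Star:
  "Er_conv A (Star S) \<Longrightarrow> Zr A (Star S) Ql Qr = trace (Ql ** Qr) + Zr A (Cat S (Star S)) Ql Qr"
  by (subst Zr_def, subst Er_Star_unfold) (simp_all add: Zr_def matrix_add_ldistrib trace_add)

lemma spmf_sample_Chr: "spmf (sample A (Chr c) Ql Qr) s = (if s = [c] then 1 else 0)"
  by (subst sample.simps) simp

lemma spmf_sample_Cat_ge:
  "spmf (sample A R1 Ql (Er A R2 Qr)) s1 * spmf (sample A R2 (El_word A s1 Ql) Qr) s2
     \<le> spmf (sample A (Cat R1 R2) Ql Qr) (s1 @ s2)"
proof -
  define p where "p = sample A R1 Ql (Er A R2 Qr)"
  define q where "q s1' = sample A R2 (El_word A s1' Ql) Qr" for s1'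
  have "sample A (Cat R1 R2) Ql Qr = p \<bind> (\<lambda>s1'. map_spmf (append s1') (q s1'))"
    by (subst sample.simps) (simp add: p_def q_def map_spmf_conv_bind_spmf)
  then have "ennreal (spmf (sample A (Cat R1 R2) Ql Qr) (s1 @ s2))
      = (\<integral>\<^sup>+s1'. ennreal (spmf p s1') * ennreal (spmf (map_spmf (append s1') (q s1')) (s1 @ s2))
           \<partial>count_space UNIV)"
    by (simp add: ennreal_spmf_bind nn_integral_measure_spmf)
  also have "\<dots> \<ge> ennreal (spmf p s1) * ennreal (spmf (map_spmf (append s1) (q s1)) (s1 @ s2))"
    by (rule nn_integral_ge_point) simp
  also have "spmf (map_spmf (append s1) (q s1)) (s1 @ s2) = spmf (q s1) s2"
    by (rule spmf_map_inj') (simp add: inj_on_def)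
  finally show ?thesis
    by (simp add: p_def q_def ennreal_mult[symmetric])
qed

lemma spmf_sample_Alt:
  assumes "0 \<le> Zr A R1 Ql Qr" and "0 \<le> Zr A R2 Ql Qr"
  shows "spmf (sample A (Alt R1 R2) Ql Qr) s * Zr A (Alt R1 R2) Ql Qr
       = Zr A R1 Ql Qr * spmf (sample A R1 Ql Qr) s + Zr A R2 Ql Qr * spmf (sample A R2 Ql Qr) s"
proof -
  have "sample A (Alt R1 R2) Ql Qr
      = spmf_of_pmf (bernoulli_pmf (Zr A R1 Ql Qr / Zr A (Alt R1 R2) Ql Qr))
          \<bind> (\<lambda>b. if b then sample A R1 Ql Qr else sample A R2 Ql Qr)"
    by (subst sample.simps) simp
  then show ?thesis
    by (simp only: Zr_Alt spmf_bernoulli_mix[OF assms])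
qed

lemma spmf_sample_Star:
  assumes "Er_conv A (Star S)" and "0 \<le> trace (Ql ** Qr)" and "0 \<le> Zr A (Cat S (Star S)) Ql Qr"
  shows "spmf (sample A (Star S) Ql Qr) s * Zr A (Star S) Ql Qr
       = trace (Ql ** Qr) * (if s = [] then 1 else 0)
         + Zr A (Cat S (Star S)) Ql Qr * spmf (sample A (Cat S (Star S)) Ql Qr) s"
proof -
  have "sample A (Star S) Ql Qr
      = spmf_of_pmf (bernoulli_pmf (trace (Ql ** Qr) / Zr A (Star S) Ql Qr))
          \<bind> (\<lambda>b. if b then return_spmf [] else sample A (Cat S (Star S)) Ql Qr)"
    by (subst sample.simps) simp
  then have "spmf (sample A (Star S) Ql Qr) s * Zr A (Star S) Ql Qr
      = trace (Ql ** Qr) * spmf (return_spmf []) s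
        + Zr A (Cat S (Star S)) Ql Qr * spmf (sample A (Cat S (Star S)) Ql Qr) s"
    by (simp only: Zr_Star[OF assms(1)] spmf_bernoulli_mix[OF assms(2,3)])
  then show ?thesis
    by simp
qed

definition sample_bound :: "('c \<Rightarrow> 'd::finite mat) \<Rightarrow> 'c regex \<Rightarrow> 'c list \<Rightarrow> bool" where
  "sample_bound A R s \<longleftrightarrow> (\<forall>u Q. psd Q \<longrightarrow>
     weight A u Q s \<le> spmf (sample A R (outer u u) Q) s * quad_form (Er A R Q) u)"

lemma sample_bound_Chr: "sample_bound A (Chr c) [c]"
  by (simp add: sample_bound_def spmf_sample_Chr weight_Er_Chr)

lemma sample_bound_Cat:
  fixes A :: "'c \<Rightarrow> 'd::finite mat"
  assumes conv: "Er_conv A (Cat R1 R2)"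
    and bound1: "sample_bound A R1 s1" and bound2: "sample_bound A R2 s2"
  shows "sample_bound A (Cat R1 R2) (s1 @ s2)"
  unfolding sample_bound_def
proof (intro allI impI)
  fix u and Q :: "'d mat"
  assume Q: "psd Q"
  define u1 where "u1 = left_state A s1 u"
  define p1 where "p1 = spmf (sample A R1 (outer u u) (Er A R2 Q)) s1"
  define p2 where "p2 = spmf (sample A R2 (outer u1 u1) Q) s2"
  define Z where "Z = quad_form (Er A (Cat R1 R2) Q) u"
  have "0 \<le> Z"
    using psd_Er[OF conv Q] by (simp add: psd_def Z_def)
  have "weight A u Q (s1 @ s2) = weight A u1 Q s2"
    by (simp add: weight_append u1_def)
  also have "\<dots> \<le> p2 * weight A u (Er A R2 Q) s1"
    using bound2 Q by (simp add: sample_bound_def p2_def weight_def u1_def)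
  also have "\<dots> \<le> p2 * (p1 * Z)"
    using bound1 psd_Er[of A R2 Q] conv Q
    by (intro mult_left_mono) (simp_all add: sample_bound_def p1_def p2_def Z_def)
  also have "\<dots> = (p1 * p2) * Z"
    by (simp add: mult_ac)
  also have "\<dots> \<le> spmf (sample A (Cat R1 R2) (outer u u) Q) (s1 @ s2) * Z"
    using spmf_sample_Cat_ge[of A R1 "outer u u" R2 Q s1 s2] \<open>0 \<le> Z\<close>
    by (intro mult_right_mono) (simp_all add: p1_def p2_def u1_def El_word_outer)
  finally show "weight A u Q (s1 @ s2)
      \<le> spmf (sample A (Cat R1 R2) (outer u u) Q) (s1 @ s2) * quad_form (Er A (Cat R1 R2) Q) u"
    by (simp add: Z_def)
qed

lemma sample_bound_Alt:
  fixes A :: "'c \<Rightarrow> 'd::finite mat"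
  assumes conv: "Er_conv A (Alt R1 R2)" and bound: "sample_bound A R1 s \<or> sample_bound A R2 s"
  shows "sample_bound A (Alt R1 R2) s"
  unfolding sample_bound_def
proof (intro allI impI)
  fix u and Q :: "'d mat"
  assume Q: "psd Q"
  define Z1 where "Z1 = quad_form (Er A R1 Q) u"
  define Z2 where "Z2 = quad_form (Er A R2 Q) u"
  define p1 where "p1 = spmf (sample A R1 (outer u u) Q) s"
  define p2 where "p2 = spmf (sample A R2 (outer u u) Q) s"
  have "0 \<le> Z1" "0 \<le> Z2"
    using conv Q psd_Er[of A R1 Q] psd_Er[of A R2 Q] by (simp_all add: psd_def Z1_def Z2_def)
  then have mix: "spmf (sample A (Alt R1 R2) (outer u u) Q) s * (Z1 + Z2) = Z1 * p1 + Z2 * p2"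
    using spmf_sample_Alt[of A R1 "outer u u" Q R2 s]
    by (simp add: Zr_outer Zr_Alt quad_form_add Z1_def Z2_def p1_def p2_def)
  have "weight A u Q s \<le> Z1 * p1 + Z2 * p2"
    using bound Q \<open>0 \<le> Z1\<close> \<open>0 \<le> Z2\<close>
    by (auto simp: sample_bound_def Z1_def Z2_def p1_def p2_def mult.commute
        intro: add_increasing add_increasing2)
  moreover have "quad_form (Er A (Alt R1 R2) Q) u = Z1 + Z2"
    by (simp add: quad_form_add Z1_def Z2_def)
  ultimately show "weight A u Q s
      \<le> spmf (sample A (Alt R1 R2) (outer u u) Q) s * quad_form (Er A (Alt R1 R2) Q) u"
    by (simp only: mix)
qed

lemma sample_bound_Star:
  fixes A :: "'c \<Rightarrow> 'd::finite mat"
  assumes conv: "Er_conv A (Star S)" and bound: "s = [] \<or> sample_bound A (Cat S (Star S)) s"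
  shows "sample_bound A (Star S) s"
  unfolding sample_bound_def
proof (intro allI impI)
  fix u and Q :: "'d mat"
  assume Q: "psd Q"
  define Zc where "Zc = quad_form (Er A (Cat S (Star S)) Q) u"
  define pc where "pc = spmf (sample A (Cat S (Star S)) (outer u u) Q) s"
  have "0 \<le> quad_form Q u" "0 \<le> Zc"
    using conv Q psd_Er[of A "Cat S (Star S)" Q] by (simp_all add: psd_def Zc_def)
  then have mix: "spmf (sample A (Star S) (outer u u) Q) s * quad_form (Er A (Star S) Q) u
      = quad_form Q u * (if s = [] then 1 else 0) + Zc * pc"
    using spmf_sample_Star[OF conv, of "outer u u" Q s]
    by (simp add: Zr_outer trace_outer_mult Zc_def pc_def)
  have "weight A u Q s \<le> quad_form Q u * (if s = [] then 1 else 0) + Zc * pc"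
    using bound Q \<open>0 \<le> quad_form Q u\<close> \<open>0 \<le> Zc\<close>
    by (auto simp: sample_bound_def Zc_def pc_def mult.commute intro: add_increasing)
  then show "weight A u Q s \<le> spmf (sample A (Star S) (outer u u) Q) s * quad_form (Er A (Star S) Q) u"
    unfolding mix .
qed

lemma sample_bound_Star_lang:
  fixes A :: "'c \<Rightarrow> 'd::finite mat"
  assumes conv: "Er_conv A (Star S)" and eps_free: "[] \<notin> lang S"
    and bound_S: "\<And>s1. s1 \<in> lang S \<Longrightarrow> sample_bound A S s1"
  shows "s \<in> lang (Star S) \<Longrightarrow> sample_bound A (Star S) s"
proof (induction "length s" arbitrary: s rule: less_induct)
  case less
  show ?case
  proof (cases "s = []")
    case False
    then have "s \<in> lang (Cat S (Star S))"
      using less.prems by (simp add: in_lang_Star)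
    then obtain s1 s2 where s: "s = s1 @ s2" "s1 \<in> lang S" "s2 \<in> lang (Star S)"
      by (auto simp: in_lang_Cat)
    have "s1 \<noteq> []"
      using eps_free s(2) by auto
    then have "sample_bound A (Star S) s2"
      using less.hyps s by simp
    then have "sample_bound A (Cat S (Star S)) s"
      using conv bound_S s by (simp add: sample_bound_Cat)
    then show ?thesis
      using conv by (simp add: sample_bound_Star)
  qed (use conv sample_bound_Star in blast)
qed

lemma sample_bound_lang:
  fixes A :: "'c \<Rightarrow> 'd::finite mat"
  assumes "eps_free_stars R" and "Er_conv A R" and "s \<in> lang R"
  shows "sample_bound A R s"
  using assms
proof (induction R arbitrary: s)
  case (Chr c)
  then show ?case by (simp add: in_lang_Chr sample_bound_Chr)
next
  case (Cat R1 R2)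
  then obtain s1 s2 where "s = s1 @ s2" "s1 \<in> lang R1" "s2 \<in> lang R2"
    by (auto simp: in_lang_Cat)
  then show ?case
    using Cat by (simp add: sample_bound_Cat)
next
  case (Alt R1 R2)
  then show ?case
    by (auto simp: in_lang_Alt intro: sample_bound_Alt)
next
  case (Star S)
  then show ?case
    by (simp add: sample_bound_Star_lang)
qed

lemma spmf_sample:
  fixes A :: "'c::countable \<Rightarrow> 'd::finite mat"
  assumes "unambiguous R" and "Er_conv A R" and "psd Q" and Zpos: "0 < quad_form (Er A R Q) u"
  shows "spmf (sample A R (outer u u) Q) s
       = (if s \<in> lang R then weight A u Q s / quad_form (Er A R Q) u else 0)"
proof -
  define Z where "Z = quad_form (Er A R Q) u"
  define t where "t s = indicator (lang R) s * weight A u Q s / Z" for s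
  have "0 \<le> t s" for s
    using \<open>psd Q\<close> Zpos by (simp add: t_def Z_def weight_nonneg)
  moreover have "t s \<le> spmf (sample A R (outer u u) Q) s" for s
  proof (cases "s \<in> lang R")
    case True
    then have "sample_bound A R s"
      using assms by (simp add: sample_bound_lang unambiguous_imp_eps_free_stars)
    then show ?thesis
      using True \<open>psd Q\<close> Zpos by (simp add: sample_bound_def t_def Z_def pos_divide_le_eq)
  qed (simp add: t_def)
  moreover have "(\<integral>\<^sup>+s. ennreal (t s) \<partial>count_space UNIV) = 1"
  proof -
    have "ennreal (t s) = mcount R s * weight A u Q s * ennreal (inverse Z)" for s
      using \<open>psd Q\<close> Zpos
      by (cases "s \<in> lang R")
        (simp_all add: t_def Z_def mcount_unambiguous[OF \<open>unambiguous R\<close>] divide_inverse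
          ennreal_mult weight_nonneg)
    then have "(\<integral>\<^sup>+s. ennreal (t s) \<partial>count_space UNIV)
        = (\<integral>\<^sup>+s. mcount R s * weight A u Q s \<partial>count_space UNIV) * ennreal (inverse Z)"
      by (simp add: nn_integral_multc)
    also have "\<dots> = 1"
      using assms by (simp add: nn_integral_mcount_weight Z_def ennreal_mult[symmetric])
    finally show ?thesis .
  qed
  ultimately have "spmf (sample A R (outer u u) Q) s = t s"
    by (rule spmf_eq_if_lower_bound)
  then show ?thesis
    by (simp add: t_def Z_def)
qed

theorem theorem1:
  fixes A :: "'c::finite \<Rightarrow> real^'d^'d" and \<alpha> \<omega> :: "real^'d::finite" and R :: "'c regex"
  defines "Zstar \<equiv> infsum (\<lambda>s. (amp A \<alpha> \<omega> s)\<^sup>2) UNIV"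
  defines "Pstar \<equiv> (\<lambda>s. (amp A \<alpha> \<omega> s)\<^sup>2 / Zstar)"
  defines "PR \<equiv> infsum Pstar (lang R)"
  assumes "(\<lambda>s. (amp A \<alpha> \<omega> s)\<^sup>2) summable_on UNIV"
    and "Zstar > 0"
    and "unambiguous R"
    and "Er_conv A R"
    and "PR > 0"
  shows "\<forall>s. spmf (sample A R (outer \<alpha> \<alpha>) (outer \<omega> \<omega>)) s
               = (if s \<in> lang R then Pstar s / PR else 0)"
proof
  fix s
  define f where "f = weight A \<alpha> (outer \<omega> \<omega>)"
  have f_eq: "f = (\<lambda>s. (amp A \<alpha> \<omega> s)\<^sup>2)"
    by (simp add: f_def weight_outer_eq_amp fun_eq_iff)
  have "f summable_on lang R"
    unfolding f_eq by (rule summable_on_subset_banach[OF assms(4)]) simp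
  then have Z: "quad_form (Er A R (outer \<omega> \<omega>)) \<alpha> = infsum f (lang R)"
    unfolding f_def by (rule quad_form_Er_eq_infsum[OF assms(6,7) psd_outer])
  have PR: "PR = infsum f (lang R) / Zstar"
    by (simp add: PR_def Pstar_def f_eq divide_inverse infsum_cmult_left')
  then have "0 < infsum f (lang R)"
    using assms(5,8) by (simp add: zero_less_divide_iff)
  then have "spmf (sample A R (outer \<alpha> \<alpha>) (outer \<omega> \<omega>)) s
      = (if s \<in> lang R then f s / quad_form (Er A R (outer \<omega> \<omega>)) \<alpha> else 0)"
    unfolding f_def by (intro spmf_sample[OF assms(6,7) psd_outer]) (simp add: Z f_def)
  also have "\<dots> = (if s \<in> lang R then Pstar s / PR else 0)"
    using assms(5) by (simp add: Z PR Pstar_def f_eq)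
  finally show "spmf (sample A R (outer \<alpha> \<alpha>) (outer \<omega> \<omega>)) s
      = (if s \<in> lang R then Pstar s / PR else 0)" .
qed

end
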